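(* Let $m+n\ge 3$. Every element $X\in\mathfrak{stl}(m,n,\mathcal A)$ can be written uniquely as $X=p+h+q$ with $p\in P$, $h\in H$, $q\in Q$.
   Context: Standing assumptions: $K$ is a field with $\operatorname{char}K\ne 2,3$, and $\mathcal A$ is an associative unital $K$-algebra. For $1\le i,j\le m+n$ put $\tau_{ij}=0$ if $i,j\le m$ or $i,j\ge m+1$, and $\tau_{ij}=1$ otherwise. A Leibniz superalgebra is a $\mathbb Z_2$-graded $K$-space with a bilinear bracket respecting the grading and satisfying $[[a,b],c]=[a,[b,c]]-(-1)^{|a||b|}[b,[a,c]]$. The Steinberg Leibniz superalgebra $\mathfrak{stl}(m,n,\mathcal A)$ is the Leibniz superalgebra generated by $v_{ij}(a)$, $1\le i\ne j\le m+n$, $a\in\mathcal A$, of degree $\tau_{ij}$, subject to: (1) $v_{ij}$ is $K$-linear in $a$; (2) $[v_{ij}(a),v_{kl}(b)]=0$ if $i\ne l$, $j\ne k$; (3) $[v_{ij}(a),v_{kl}(b)]=v_{il}(ab)$ if $i\ne l$, $j=k$; (4) $[v_{ij}(a),v_{kl}(b)]=-(-1)^{\tau_{ij}\tau_{kl}}v_{kj}(ba)$ if $i=l$, $j\ne k$. $P$ (resp. $Q$) is the $K$-subspace of $\mathfrak{stl}(m,n,\mathcal A)$ spanned by the $v_{ij}(a)$ with $i<j$ (resp. $i>j$), $a\in\mathcal A$. For $i\ne j$ and $a,b\in\mathcal A$ let $H_{ij}(a,b)=[v_{ij}(a),v_{ji}(b)]$, and let $H$ be the $K$-subspace spanned by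 all $H_{ij}(a,b)$. *)

theory Defs
  imports Main
begin

definition kalg :: "('k::field \<Rightarrow> 'a::ring_1 \<Rightarrow> 'a) \<Rightarrow> bool" where
  "kalg sm \<longleftrightarrow> (\<forall>c d x y.
      sm c (x + y) = sm c x + sm c y \<and> sm (c + d) x = sm c x + sm d x \<and>
      sm (c * d) x = sm c (sm d x) \<and> sm 1 x = x \<and>
      sm c (x * y) = sm c x * y \<and> sm c (x * y) = x * sm c y)"

text \<open>Nonassociative monomials in the generators v_ij(a).\<close>
datatype 'a mon = Gen nat nat 'a | Br "'a mon" "'a mon"

definition tau :: "nat \<Rightarrow> nat \<Rightarrow> nat \<Rightarrow> nat" where
  "tau m i j = (if (i \<le> m \<and> j \<le> m) \<or> (m + 1 \<le> i \<and> m + 1 \<le> j) then 0 else 1)"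

fun deg :: "nat \<Rightarrow> 'a mon \<Rightarrow> nat" where
  "deg m (Gen i j a) = tau m i j"
| "deg m (Br u v) = (deg m u + deg m v) mod 2"

fun wf_mon :: "nat \<Rightarrow> 'a mon \<Rightarrow> bool" where
  "wf_mon N (Gen i j a) = (1 \<le> i \<and> i \<le> N \<and> 1 \<le> j \<and> j \<le> N \<and> i \<noteq> j)"
| "wf_mon N (Br u v) = (wf_mon N u \<and> wf_mon N v)"

text \<open>The free (nonassociative) K-algebra on the generators: finitely supported
K-valued functions on well-formed monomials, with the bilinear bracket.\<close>
definition freeA :: "nat \<Rightarrow> ('a mon \<Rightarrow> 'k::field) set" where
  "freeA N = {f. finite {u. f u \<noteq> 0} \<and> (\<forall>u. f u \<noteq> 0 \<longrightarrow> wf_mon N u)}"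

definition dlt :: "'a mon \<Rightarrow> 'a mon \<Rightarrow> 'k::field" where
  "dlt u = (\<lambda>w. if w = u then 1 else 0)"

fun brk :: "('a mon \<Rightarrow> 'k::field) \<Rightarrow> ('a mon \<Rightarrow> 'k) \<Rightarrow> 'a mon \<Rightarrow> 'k" where
  "brk f g (Gen i j a) = 0"
| "brk f g (Br u v) = f u * g v"

definition sgn1 :: "nat \<Rightarrow> 'k::field" where
  "sgn1 e = (- 1) ^ e"

inductive_set kspan :: "('b \<Rightarrow> 'k::field) set \<Rightarrow> ('b \<Rightarrow> 'k) set" for S where
  zero: "(\<lambda>_. 0) \<in> kspan S"
| add: "x \<in> S \<Longrightarrow> y \<in> kspan S \<Longrightarrow> (\<lambda>w. c * x w + y w) \<in> kspan S"

text \<open>Defining relations of stl(m,n,A) together with the super Leibniz identity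
(imposed on monomials, which are homogeneous and span).\<close>
definition stl_rels :: "nat \<Rightarrow> nat \<Rightarrow> ('k::field \<Rightarrow> 'a::ring_1 \<Rightarrow> 'a) \<Rightarrow> ('a mon \<Rightarrow> 'k) set" where
  "stl_rels m n sm =
     {(\<lambda>w. dlt (Gen i j (a + b)) w - dlt (Gen i j a) w - dlt (Gen i j b) w) | i j a b.
        wf_mon (m + n) (Gen i j a)}
   \<union> {(\<lambda>w. dlt (Gen i j (sm c a)) w - c * dlt (Gen i j a) w) | i j a c.
        wf_mon (m + n) (Gen i j a)}
   \<union> {dlt (Br (Gen i j a) (Gen k l b)) | i j k l a b.
        wf_mon (m + n) (Gen i j a) \<and> wf_mon (m + n) (Gen k l b) \<and> i \<noteq> l \<and> j \<noteq> k}
   \<union> {(\<lambda>w. dlt (Br (Gen i j a) (Gen k l b)) w - dlt (Gen i l (a * b)) w) | i j k l a b.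
        wf_mon (m + n) (Gen i j a) \<and> wf_mon (m + n) (Gen k l b) \<and> i \<noteq> l \<and> j = k}
   \<union> {(\<lambda>w. dlt (Br (Gen i j a) (Gen k l b)) w
            + sgn1 (tau m i j * tau m k l) * dlt (Gen k j (b * a)) w) | i j k l a b.
        wf_mon (m + n) (Gen i j a) \<and> wf_mon (m + n) (Gen k l b) \<and> i = l \<and> j \<noteq> k}
   \<union> {(\<lambda>w. dlt (Br (Br u v) x) w - dlt (Br u (Br v x)) w
            + sgn1 (deg m u * deg m v) * dlt (Br v (Br u x)) w) | u v x.
        wf_mon (m + n) u \<and> wf_mon (m + n) v \<and> wf_mon (m + n) x}"

text \<open>The two-sided ideal of the free algebra generated by the relations;
stl(m,n,A) is freeA / stl_ideal.\<close>
inductive_set stl_ideal :: "nat \<Rightarrow> nat \<Rightarrow> ('k::field \<Rightarrow> 'a::ring_1 \<Rightarrow> 'a) \<Rightarrow> ('a mon \<Rightarrow> 'k) set"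
  for m n sm where
  rel: "x \<in> stl_rels m n sm \<Longrightarrow> x \<in> stl_ideal m n sm"
| zero: "(\<lambda>_. 0) \<in> stl_ideal m n sm"
| add: "x \<in> stl_ideal m n sm \<Longrightarrow> y \<in> stl_ideal m n sm \<Longrightarrow> (\<lambda>w. c * x w + y w) \<in> stl_ideal m n sm"
| brl: "x \<in> stl_ideal m n sm \<Longrightarrow> y \<in> freeA (m + n) \<Longrightarrow> brk x y \<in> stl_ideal m n sm"
| brr: "x \<in> stl_ideal m n sm \<Longrightarrow> y \<in> freeA (m + n) \<Longrightarrow> brk y x \<in> stl_ideal m n sm"

text \<open>Preimages in the free algebra of P, Q and H.\<close>
definition Pspan :: "nat \<Rightarrow> ('a mon \<Rightarrow> 'k::field) set" where
  "Pspan N = kspan {dlt (Gen i j a) | i j a. wf_mon N (Gen i j a) \<and> i < j}"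

definition Qspan :: "nat \<Rightarrow> ('a mon \<Rightarrow> 'k::field) set" where
  "Qspan N = kspan {dlt (Gen i j a) | i j a. wf_mon N (Gen i j a) \<and> i > j}"

definition Hspan :: "nat \<Rightarrow> ('a mon \<Rightarrow> 'k::field) set" where
  "Hspan N = kspan {dlt (Br (Gen i j a) (Gen j i b)) | i j a b. wf_mon N (Gen i j a)}"

end

theory Submission
  imports Defs
begin

text \<open>
  Existence: modulo the ideal, the span of the generators \<open>v\<^sub>i\<^sub>j(a)\<close> and of the
  brackets \<open>H\<^sub>i\<^sub>j(a,b)\<close> is closed under the bracket, hence contains every monomial.
  For \<open>[v, v']\<close> this is one of the defining relations; for \<open>[v\<^sub>k\<^sub>l(c), H\<^sub>i\<^sub>j(a,b)]\<close>
  the Leibniz identity reduces it to brackets of generators, except when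
  \<open>{k,l} = {i,j}\<close>, where one first factors \<open>v\<^sub>k\<^sub>l(c) = [v\<^sub>k\<^sub>t(c), v\<^sub>t\<^sub>l(1)]\<close> through a
  third index \<open>t\<close>; this is where \<open>m + n \<ge> 3\<close> is used. Brackets \<open>[H, X]\<close> then
  follow from the Leibniz identity once more.

  Uniqueness: the assignment \<open>v\<^sub>i\<^sub>j(a) \<mapsto> a E\<^sub>i\<^sub>j\<close>, with the supercommutator of
  \<open>(m|n)\<close>-supermatrices over \<open>\<A>\<close>, kills all relations, so it factors through
  \<open>stl(m,n,\<A>)\<close>. It sends \<open>P\<close>, \<open>H\<close>, \<open>Q\<close> to strictly upper triangular, diagonal and
  strictly lower triangular matrices, and an element of \<open>P\<close> (or \<open>Q\<close>) is determined
  modulo the ideal by its image.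
\<close>

section \<open>Spans and the free algebra\<close>

lemma kspan_scale: "x \<in> kspan S \<Longrightarrow> (\<lambda>w. d * x w) \<in> kspan S"
proof (induction rule: kspan.induct)
  case zero
  then show ?case by (simp add: kspan.zero)
next
  case (add x y c)
  from kspan.add[OF add.hyps(1) add.IH, of "d * c"] show ?case
    by (simp add: algebra_simps)
qed

lemma kspan_lin: "x \<in> kspan S \<Longrightarrow> y \<in> kspan S \<Longrightarrow> (\<lambda>w. c * x w + d * y w) \<in> kspan S"
proof (induction rule: kspan.induct)
  case zero
  then show ?case using kspan_scale by simp
next
  case (add g x c')
  from kspan.add[OF add.hyps(1) add.IH[OF add.prems], of "c * c'"] show ?case
    by (simp add: algebra_simps)
qed

lemma kspan_base: "g \<in> S \<Longrightarrow> g \<in> kspan S"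
  using kspan.add[OF _ kspan.zero, of g S 1] by simp

lemma kspan_mono: "x \<in> kspan S \<Longrightarrow> S \<subseteq> T \<Longrightarrow> x \<in> kspan T"
  by (induction rule: kspan.induct) (auto intro: kspan.zero kspan.add)

lemma kspan_sum:
  assumes "finite U" and "\<forall>u\<in>U. g u \<in> S"
  shows "(\<lambda>w. \<Sum>u\<in>U. c u * g u w) \<in> kspan S"
  using assms
proof (induction U rule: finite_induct)
  case empty
  then show ?case by (simp add: kspan.zero)
next
  case (insert u U)
  then show ?case using kspan.add[of "g u" S _ "c u"] by simp
qed

lemma kspan_Un:
  "x \<in> kspan (A \<union> B) \<Longrightarrow> \<exists>a\<in>kspan A. \<exists>b\<in>kspan B. x = (\<lambda>w. a w + b w)"
proof (induction rule: kspan.induct)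
  case zero
  then show ?case by (auto intro!: bexI[of _ "\<lambda>_. 0"] kspan.zero)
next
  case (add g x c)
  then obtain a b where ab: "a \<in> kspan A" "b \<in> kspan B" "x = (\<lambda>w. a w + b w)" by blast
  from \<open>g \<in> A \<union> B\<close> show ?case
  proof
    assume "g \<in> A"
    with ab show ?thesis
      by (intro bexI[OF _ kspan.add[of g A a c]] bexI[OF _ ab(2)]) (auto simp: algebra_simps)
  next
    assume "g \<in> B"
    with ab show ?thesis
      by (intro bexI[OF _ ab(1)] bexI[OF _ kspan.add[of g B b c]]) (auto simp: algebra_simps)
  qed
qed

lemma exists_third_index: "3 \<le> (N::nat) \<Longrightarrow> \<exists>t. 1 \<le> t \<and> t \<le> N \<and> t \<noteq> i \<and> t \<noteq> j"
  by presburger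

lemma finite_support_lin:
  "finite {u. f u \<noteq> 0} \<Longrightarrow> finite {u. g u \<noteq> 0} \<Longrightarrow> finite {u. c * f u + d * g u \<noteq> (0::'k::field)}"
  by (rule finite_subset[of _ "{u. f u \<noteq> 0} \<union> {u. g u \<noteq> 0}"]) auto

lemma finite_support_dlt: "finite {w. dlt u w \<noteq> (0::'k::field)}"
  by (rule finite_subset[of _ "{u}"]) (auto simp: dlt_def)

lemma freeA_finite_support: "f \<in> freeA N \<Longrightarrow> finite {u. f u \<noteq> 0}"
  unfolding freeA_def by simp

lemma freeA_intro:
  "finite F \<Longrightarrow> \<forall>u\<in>F. wf_mon N u \<Longrightarrow> \<forall>w. w \<notin> F \<longrightarrow> f w = 0 \<Longrightarrow> f \<in> freeA N"
  unfolding freeA_def by (auto intro: finite_subset[of _ F])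

lemma freeA_zero: "(\<lambda>_. 0) \<in> freeA N"
  unfolding freeA_def by simp

lemma freeA_lin: "x \<in> freeA N \<Longrightarrow> y \<in> freeA N \<Longrightarrow> (\<lambda>w. c * x w + d * y w) \<in> freeA N"
  unfolding freeA_def
  by (auto intro: finite_support_lin; metis add.right_neutral mult_zero_right)

lemma dlt_in_freeA: "wf_mon N u \<Longrightarrow> dlt u \<in> freeA N"
  by (rule freeA_intro[of "{u}"]) (auto simp: dlt_def)

lemma kspan_in_freeA: "x \<in> kspan S \<Longrightarrow> S \<subseteq> freeA N \<Longrightarrow> x \<in> freeA N"
proof (induction rule: kspan.induct)
  case zero
  then show ?case by (simp add: freeA_zero)
next
  case (add x y c)
  then show ?case using freeA_lin[of x N y c 1] by auto
qed

lemma freeA_in_kspan_monomials: "f \<in> freeA N \<Longrightarrow> f \<in> kspan {dlt u | u. wf_mon N u}"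
proof -
  assume f: "f \<in> freeA N"
  let ?U = "{u. f u \<noteq> 0}"
  have "f w = (\<Sum>u\<in>?U. f u * dlt u w)" for w
  proof -
    have "(\<Sum>u\<in>?U. f u * dlt u w) = (\<Sum>u\<in>?U. if u = w then f w else 0)"
      by (rule sum.cong) (auto simp: dlt_def)
    then show ?thesis by (simp add: freeA_finite_support[OF f])
  qed
  then have "f = (\<lambda>w. \<Sum>u\<in>?U. f u * dlt u w)" ..
  also have "\<dots> \<in> kspan {dlt u | u. wf_mon N u}"
    using f by (intro kspan_sum) (auto simp: freeA_def)
  finally show ?thesis .
qed

lemma brk_lin_left: "brk (\<lambda>w. c * x w + d * y w) z = (\<lambda>w. c * brk x z w + d * brk y z w)"
proof
  show "brk (\<lambda>w. c * x w + d * y w) z w = c * brk x z w + d * brk y z w" for w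
    by (cases w) (auto simp: algebra_simps)
qed

lemma brk_lin_right: "brk z (\<lambda>w. c * x w + d * y w) = (\<lambda>w. c * brk z x w + d * brk z y w)"
proof
  show "brk z (\<lambda>w. c * x w + d * y w) w = c * brk z x w + d * brk z y w" for w
    by (cases w) (auto simp: algebra_simps)
qed

lemma brk_scale_left: "brk (\<lambda>w. c * x w) z = (\<lambda>w. c * brk x z w)"
  using brk_lin_left[of c x 0 x z] by simp

lemma brk_scale_right: "brk z (\<lambda>w. c * x w) = (\<lambda>w. c * brk z x w)"
  using brk_lin_right[of z c x 0 x] by simp

lemma brk_zero_left: "brk (\<lambda>_. 0) z = (\<lambda>_. 0)"
  using brk_scale_left[of 0 z z] by simp

lemma brk_zero_right: "brk z (\<lambda>_. 0) = (\<lambda>_. 0)"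
  using brk_scale_right[of z 0 z] by simp

lemma brk_dlt: "brk (dlt u) (dlt v) = dlt (Br u v)"
proof
  show "brk (dlt u) (dlt v) w = dlt (Br u v) w" for w
    by (cases w) (auto simp: dlt_def)
qed

lemma brk_support: "brk x y w \<noteq> 0 \<Longrightarrow> \<exists>u v. w = Br u v \<and> x u \<noteq> 0 \<and> y v \<noteq> 0"
  by (cases w) auto

lemma brk_in_freeA: "x \<in> freeA N \<Longrightarrow> y \<in> freeA N \<Longrightarrow> brk x y \<in> freeA N"
proof -
  assume x: "x \<in> freeA N" and y: "y \<in> freeA N"
  let ?B = "(\<lambda>(u, v). Br u v) ` ({u. x u \<noteq> 0} \<times> {u. y u \<noteq> 0})"
  have "{w. brk x y w \<noteq> 0} \<subseteq> ?B"
    by (auto dest!: brk_support)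
  moreover have "finite ?B"
    using x y by (simp add: freeA_finite_support)
  ultimately have "finite {w. brk x y w \<noteq> 0}" by (rule finite_subset)
  then show ?thesis using x y unfolding freeA_def by (auto dest!: brk_support)
qed

section \<open>Supermatrices\<close>

lemma tau_less_2: "tau m x y < 2"
  unfolding tau_def by auto

lemma tau_trans: "tau m x y = (tau m x z + tau m z y) mod 2"
  unfolding tau_def by auto

lemma deg_less_2: "deg m u < 2"
  by (induction u) (auto simp: tau_less_2)

definition elem :: "nat \<Rightarrow> nat \<Rightarrow> 'a::zero \<Rightarrow> nat \<Rightarrow> nat \<Rightarrow> 'a" where
  "elem i j a = (\<lambda>x y. if x = i \<and> y = j then a else 0)"

definition mat_mult :: "nat \<Rightarrow> (nat \<Rightarrow> nat \<Rightarrow> 'a::semiring_0) \<Rightarrow> (nat \<Rightarrow> nat \<Rightarrow> 'a) \<Rightarrow> nat \<Rightarrow> nat \<Rightarrow> 'a"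
  where "mat_mult N X Y = (\<lambda>x y. \<Sum>z\<in>{1..N}. X x z * Y z y)"

text \<open>The supercommutator of \<open>(m|N-m)\<close>-supermatrices, with the sign read off the entries, so that
  no degrees are needed; on homogeneous matrices it is \<open>XY - (-1)\<^bsup>|X||Y|\<^esup> YX\<close>.\<close>

definition super_bracket ::
  "nat \<Rightarrow> nat \<Rightarrow> (nat \<Rightarrow> nat \<Rightarrow> 'a::ring_1) \<Rightarrow> (nat \<Rightarrow> nat \<Rightarrow> 'a) \<Rightarrow> nat \<Rightarrow> nat \<Rightarrow> 'a" where
  "super_bracket m N X Y =
    (\<lambda>x y. \<Sum>z\<in>{1..N}. X x z * Y z y - (- 1) ^ (tau m x z * tau m z y) * (Y x z * X z y))"

definition homogeneous :: "nat \<Rightarrow> (nat \<Rightarrow> nat \<Rightarrow> 'a::zero) \<Rightarrow> nat \<Rightarrow> bool" where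
  "homogeneous m X d \<longleftrightarrow> (\<forall>x y. X x y \<noteq> 0 \<longrightarrow> tau m x y = d)"

primrec rep_mon :: "nat \<Rightarrow> nat \<Rightarrow> 'a::ring_1 mon \<Rightarrow> nat \<Rightarrow> nat \<Rightarrow> 'a" where
  "rep_mon m N (Gen i j a) = elem i j a"
| "rep_mon m N (Br u v) = super_bracket m N (rep_mon m N u) (rep_mon m N v)"

lemma homogeneous_super_bracket:
  assumes X: "homogeneous m X dx" and Y: "homogeneous m Y dy"
  shows "homogeneous m (super_bracket m N X Y) ((dx + dy) mod 2)"
  unfolding homogeneous_def
proof (intro allI impI)
  fix x y
  assume "super_bracket m N X Y x y \<noteq> 0"
  then obtain z where "X x z * Y z y - (- 1) ^ (tau m x z * tau m z y) * (Y x z * X z y) \<noteq> 0"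
    unfolding super_bracket_def by (rule sum.not_neutral_contains_not_neutral)
  then have "X x z \<noteq> 0 \<and> Y z y \<noteq> 0 \<or> Y x z \<noteq> 0 \<and> X z y \<noteq> 0" by auto
  then show "tau m x y = (dx + dy) mod 2"
  proof
    assume "X x z \<noteq> 0 \<and> Y z y \<noteq> 0"
    then have "tau m x z = dx" "tau m z y = dy" using X Y unfolding homogeneous_def by blast+
    then show ?thesis using tau_trans[of m x y z] by simp
  next
    assume "Y x z \<noteq> 0 \<and> X z y \<noteq> 0"
    then have "tau m x z = dy" "tau m z y = dx" using X Y unfolding homogeneous_def by blast+
    then show ?thesis using tau_trans[of m x y z] by (simp add: add.commute)
  qed
qed

lemma homogeneous_rep_mon: "homogeneous m (rep_mon m N u) (deg m u)"
proof (induction u)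
  case (Gen i j a)
  then show ?case by (auto simp: homogeneous_def elem_def)
next
  case (Br u v)
  then show ?case by (simp add: homogeneous_super_bracket)
qed

lemma super_bracket_homogeneous:
  assumes X: "homogeneous m X dx" and Y: "homogeneous m Y dy"
  shows "super_bracket m N X Y = (\<lambda>x y. mat_mult N X Y x y - (- 1) ^ (dy * dx) * mat_mult N Y X x y)"
proof (intro ext)
  fix x y
  have "(- 1) ^ (tau m x z * tau m z y) * (Y x z * X z y) = (- 1) ^ (dy * dx) * (Y x z * X z y)" for z
  proof (cases "Y x z = 0 \<or> X z y = 0")
    case False
    then show ?thesis using X Y unfolding homogeneous_def by auto
  qed auto
  then show "super_bracket m N X Y x y = mat_mult N X Y x y - (- 1) ^ (dy * dx) * mat_mult N Y X x y"
    unfolding super_bracket_def mat_mult_def by (simp add: sum_subtractf sum_distrib_left)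
qed

lemma mat_mult_assoc: "mat_mult N (mat_mult N X Y) Z = mat_mult N X (mat_mult N Y Z)"
proof (intro ext)
  fix x y
  have "mat_mult N (mat_mult N X Y) Z x y = (\<Sum>z\<in>{1..N}. \<Sum>k\<in>{1..N}. X x k * Y k z * Z z y)"
    by (simp add: mat_mult_def sum_distrib_right)
  also have "\<dots> = (\<Sum>k\<in>{1..N}. \<Sum>z\<in>{1..N}. X x k * Y k z * Z z y)"
    by (rule sum.swap)
  also have "\<dots> = mat_mult N X (mat_mult N Y Z) x y"
    by (simp add: mat_mult_def sum_distrib_left mult.assoc)
  finally show "mat_mult N (mat_mult N X Y) Z x y = mat_mult N X (mat_mult N Y Z) x y" .
qed

lemma mat_mult_diff_left:
  fixes A B Z :: "nat \<Rightarrow> nat \<Rightarrow> 'a::ring_1"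
  shows "mat_mult N (\<lambda>x y. A x y - (- 1) ^ e * B x y) Z
    = (\<lambda>x y. mat_mult N A Z x y - (- 1) ^ e * mat_mult N B Z x y)"
proof (intro ext)
  fix x y
  have "(A x z - (- 1) ^ e * B x z) * Z z y = A x z * Z z y - (- 1) ^ e * (B x z * Z z y)" for z
    by (simp only: left_diff_distrib mult.assoc)
  then show "mat_mult N (\<lambda>x y. A x y - (- 1) ^ e * B x y) Z x y
      = mat_mult N A Z x y - (- 1) ^ e * mat_mult N B Z x y"
    unfolding mat_mult_def by (simp only: sum_subtractf sum_distrib_left)
qed

lemma mat_mult_diff_right:
  fixes A B Z :: "nat \<Rightarrow> nat \<Rightarrow> 'a::ring_1"
  shows "mat_mult N Z (\<lambda>x y. A x y - (- 1) ^ e * B x y)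
    = (\<lambda>x y. mat_mult N Z A x y - (- 1) ^ e * mat_mult N Z B x y)"
proof (intro ext)
  fix x y
  have "Z x z * ((- 1) ^ e * B z y) = (- 1) ^ e * (Z x z * B z y)" for z
    by (simp add: minus_one_power_iff)
  then have "Z x z * (A z y - (- 1) ^ e * B z y) = Z x z * A z y - (- 1) ^ e * (Z x z * B z y)" for z
    by (simp only: right_diff_distrib)
  then show "mat_mult N Z (\<lambda>x y. A x y - (- 1) ^ e * B x y) x y
      = mat_mult N Z A x y - (- 1) ^ e * mat_mult N Z B x y"
    unfolding mat_mult_def by (simp only: sum_subtractf sum_distrib_left)
qed

text \<open>After expanding the three brackets of \<open>super_bracket_leibniz\<close> into products of
  \<open>X\<close>, \<open>Y\<close>, \<open>Z\<close>, what remains is this sign identity in six noncommuting words,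
  checked over the eight parities.\<close>

lemma super_leibniz_signs:
  assumes "dx < 2" "dy < 2" "dz < 2"
  shows "(a - (- 1) ^ (dy * dx) * b) - (- 1) ^ (dz * ((dx + dy) mod 2)) * (c - (- 1) ^ (dy * dx) * d)
    = ((a - (- 1) ^ (dz * dy) * e) - (- 1) ^ (((dy + dz) mod 2) * dx) * (f - (- 1) ^ (dz * dy) * d))
      - (- 1) ^ (dx * dy) * ((b - (- 1) ^ (dz * dx) * f)
          - (- 1) ^ (((dx + dz) mod 2) * dy) * (e - (- 1) ^ (dz * dx) * (c::'a::ring_1)))"
proof -
  have "dx = 0 \<or> dx = 1" "dy = 0 \<or> dy = 1" "dz = 0 \<or> dz = 1" using assms by auto
  then show ?thesis by (elim disjE) (simp_all add: algebra_simps)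
qed

lemma super_bracket_leibniz:
  assumes X: "homogeneous m X dx" and Y: "homogeneous m Y dy" and Z: "homogeneous m Z dz"
    and lt: "dx < 2" "dy < 2" "dz < 2"
  shows "super_bracket m N (super_bracket m N X Y) Z x y
    = super_bracket m N X (super_bracket m N Y Z) x y
      - (- 1) ^ (dx * dy) * super_bracket m N Y (super_bracket m N X Z) x y"
proof -
  note expand = mat_mult_diff_left mat_mult_diff_right mat_mult_assoc
  note XY = super_bracket_homogeneous[OF X Y] and YZ = super_bracket_homogeneous[OF Y Z]
    and XZ = super_bracket_homogeneous[OF X Z]
  have "super_bracket m N (super_bracket m N X Y) Z x y
      = (mat_mult N X (mat_mult N Y Z) x y - (- 1) ^ (dy * dx) * mat_mult N Y (mat_mult N X Z) x y)
        - (- 1) ^ (dz * ((dx + dy) mod 2))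
          * (mat_mult N Z (mat_mult N X Y) x y - (- 1) ^ (dy * dx) * mat_mult N Z (mat_mult N Y X) x y)"
    unfolding super_bracket_homogeneous[OF homogeneous_super_bracket[OF X Y] Z]
    unfolding XY expand ..
  moreover have "super_bracket m N X (super_bracket m N Y Z) x y
      = (mat_mult N X (mat_mult N Y Z) x y - (- 1) ^ (dz * dy) * mat_mult N X (mat_mult N Z Y) x y)
        - (- 1) ^ (((dy + dz) mod 2) * dx)
          * (mat_mult N Y (mat_mult N Z X) x y - (- 1) ^ (dz * dy) * mat_mult N Z (mat_mult N Y X) x y)"
    unfolding super_bracket_homogeneous[OF X homogeneous_super_bracket[OF Y Z]]
    unfolding YZ expand ..
  moreover have "super_bracket m N Y (super_bracket m N X Z) x y
      = (mat_mult N Y (mat_mult N X Z) x y - (- 1) ^ (dz * dx) * mat_mult N Y (mat_mult N Z X) x y)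
        - (- 1) ^ (((dx + dz) mod 2) * dy)
          * (mat_mult N X (mat_mult N Z Y) x y - (- 1) ^ (dz * dx) * mat_mult N Z (mat_mult N X Y) x y)"
    unfolding super_bracket_homogeneous[OF Y homogeneous_super_bracket[OF X Z]]
    unfolding XZ expand ..
  ultimately show ?thesis by (simp only: super_leibniz_signs[OF lt])
qed

lemma rep_mon_leibniz:
  "rep_mon m N (Br (Br u v) x) a b
    = rep_mon m N (Br u (Br v x)) a b - (- 1) ^ (deg m u * deg m v) * rep_mon m N (Br v (Br u x)) a b"
  unfolding rep_mon.simps
  by (rule super_bracket_leibniz[OF homogeneous_rep_mon homogeneous_rep_mon homogeneous_rep_mon
        deg_less_2 deg_less_2 deg_less_2])

lemma super_bracket_elem:
  "super_bracket m N (elem i j a) (elem k l b) x y =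
     (if j \<in> {1..N} \<and> x = i \<and> j = k \<and> y = l then a * b else 0)
   - (if l \<in> {1..N} \<and> x = k \<and> l = i \<and> y = j then (- 1) ^ (tau m k i * tau m i j) * (b * a) else 0)"
proof -
  have "elem i j a x z * elem k l b z y = (if z = j then (if x = i \<and> j = k \<and> y = l then a * b else 0) else 0)"
    for z by (simp add: elem_def)
  moreover have "(- 1) ^ (tau m x z * tau m z y) * (elem k l b x z * elem i j a z y)
      = (if z = l then (if x = k \<and> l = i \<and> y = j then (- 1) ^ (tau m k i * tau m i j) * (b * a) else 0)
         else 0)" for z
    by (simp add: elem_def)
  ultimately show ?thesis
    unfolding super_bracket_def by (simp add: sum_subtractf)
qed

section \<open>Congruence modulo the defining relations\<close>

locale kalgebra =
  fixes sm :: "'k::field \<Rightarrow> 'a::ring_1 \<Rightarrow> 'a"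
  assumes kalg: "kalg sm"
begin

lemma sm_add: "sm c (x + y) = sm c x + sm c y"
  and sm_add_scalar: "sm (c + d) x = sm c x + sm d x"
  and sm_sm: "sm (c * d) x = sm c (sm d x)"
  and sm_one [simp]: "sm 1 x = x"
  and sm_mult_left: "sm c (x * y) = sm c x * y"
  and sm_mult_right: "sm c (x * y) = x * sm c y"
  using kalg unfolding kalg_def by blast+

lemma sm_zero_scalar [simp]: "sm 0 x = 0"
  using sm_add_scalar[of 0 0 x] by simp

lemma sm_zero [simp]: "sm c 0 = 0"
  using sm_add[of c 0 0] by simp

lemma sm_uminus: "sm c (- x) = - sm c x"
  using sm_add[of c x "- x"] by (simp add: eq_neg_iff_add_eq_0 add.commute)

lemma sm_diff: "sm c (x - y) = sm c x - sm c y"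
  using sm_add[of c x "- y"] by (simp add: sm_uminus)

lemma sm_minus_one: "sm (- 1) x = - x"
  using sm_add_scalar[of 1 "- 1" x] by (simp add: eq_neg_iff_add_eq_0 add.commute)

lemma sm_uminus_scalar: "sm (- c) x = - sm c x"
  using sm_sm[of "- 1" c x] by (simp add: sm_minus_one)

lemma sm_sum: "sm c (\<Sum>i\<in>S. f i) = (\<Sum>i\<in>S. sm c (f i))"
  by (induction S rule: infinite_finite_induct) (auto simp: sm_add)

lemma sm_mult: "sm c x * sm d y = sm (c * d) (x * y)"
  by (metis sm_sm sm_mult_left sm_mult_right)

lemma sm_sign: "sm ((- 1) ^ e) x = (- 1) ^ e * x"
  by (cases "even e") (simp_all add: sm_minus_one)

lemma sm_sign_mult: "sm c ((- 1) ^ e * x) = (- 1) ^ e * sm c x"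
  by (cases "even e") (simp_all add: sm_uminus)

end

locale stl_presentation = kalgebra sm
  for sm :: "'k::field \<Rightarrow> 'a::ring_1 \<Rightarrow> 'a" +
  fixes m n :: nat
begin

abbreviation N :: nat where "N \<equiv> m + n"

abbreviation I :: "('a mon \<Rightarrow> 'k) set" where "I \<equiv> stl_ideal m n sm"

definition congr :: "('a mon \<Rightarrow> 'k) \<Rightarrow> ('a mon \<Rightarrow> 'k) \<Rightarrow> bool" (infix "\<approx>" 50) where
  "A \<approx> B \<longleftrightarrow> (\<lambda>w. A w - B w) \<in> I"

abbreviation gen :: "nat \<Rightarrow> nat \<Rightarrow> 'a \<Rightarrow> 'a mon \<Rightarrow> 'k" where
  "gen i j a \<equiv> dlt (Gen i j a)"

abbreviation hgen :: "nat \<Rightarrow> nat \<Rightarrow> 'a \<Rightarrow> 'a \<Rightarrow> 'a mon \<Rightarrow> 'k" where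
  "hgen i j a b \<equiv> dlt (Br (Gen i j a) (Gen j i b))"

lemma ideal_lin:
  assumes "x \<in> I" "y \<in> I"
  shows "(\<lambda>w. c * x w + d * y w) \<in> I"
proof -
  have "(\<lambda>w. d * y w + 0) \<in> I" using stl_ideal.add[OF assms(2) stl_ideal.zero] .
  from stl_ideal.add[OF assms(1) this, of c] show ?thesis by simp
qed

lemma rels_in_freeA: "x \<in> stl_rels m n sm \<Longrightarrow> x \<in> freeA N"
  unfolding stl_rels_def
  apply (elim UnE CollectE exE conjE)
  subgoal for i j a b
    by (rule freeA_intro[of "{Gen i j (a + b), Gen i j a, Gen i j b}"]) (auto simp: dlt_def)
  subgoal for i j a c
    by (rule freeA_intro[of "{Gen i j (sm c a), Gen i j a}"]) (auto simp: dlt_def)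
  subgoal for i j k l a b
    by (rule freeA_intro[of "{Br (Gen i j a) (Gen k l b)}"]) (auto simp: dlt_def)
  subgoal for i j k l a b
    by (rule freeA_intro[of "{Br (Gen i j a) (Gen k l b), Gen i l (a * b)}"]) (auto simp: dlt_def)
  subgoal for i j k l a b
    by (rule freeA_intro[of "{Br (Gen i j a) (Gen k l b), Gen k j (b * a)}"]) (auto simp: dlt_def)
  subgoal for u v x
    by (rule freeA_intro[of "{Br (Br u v) x, Br u (Br v x), Br v (Br u x)}"]) (simp_all add: dlt_def)
  done

lemma ideal_subset_freeA: "x \<in> I \<Longrightarrow> x \<in> freeA N"
proof (induction rule: stl_ideal.induct)
  case (add x y c)
  then show ?case using freeA_lin[of x _ y c 1] by simp
qed (simp_all add: rels_in_freeA freeA_zero brk_in_freeA)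

lemma congr_refl: "A \<approx> A"
  unfolding congr_def using stl_ideal.zero by simp

lemma congr_lin:
  assumes "A \<approx> A'" "B \<approx> B'"
  shows "(\<lambda>w. c * A w + d * B w) \<approx> (\<lambda>w. c * A' w + d * B' w)"
  using ideal_lin[OF assms[unfolded congr_def], of c d] unfolding congr_def
  by (simp add: algebra_simps)

lemma congr_sym: "A \<approx> B \<Longrightarrow> B \<approx> A"
  using congr_lin[OF _ congr_refl, of A B "- 1" 0 A] unfolding congr_def by simp

lemma congr_trans [trans]: "A \<approx> B \<Longrightarrow> B \<approx> C \<Longrightarrow> A \<approx> C"
  using ideal_lin[of "\<lambda>w. A w - B w" "\<lambda>w. B w - C w" 1 1] unfolding congr_def by simp

lemma congr_add: "A \<approx> A' \<Longrightarrow> B \<approx> B' \<Longrightarrow> (\<lambda>w. A w + B w) \<approx> (\<lambda>w. A' w + B' w)"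
  using congr_lin[of A A' B B' 1 1] by simp

lemma ideal_iff_congr_zero: "x \<in> I \<longleftrightarrow> x \<approx> (\<lambda>_. 0)"
  unfolding congr_def by simp

lemma congr_freeA: "A \<approx> B \<Longrightarrow> B \<in> freeA N \<Longrightarrow> A \<in> freeA N"
  unfolding congr_def using freeA_lin[OF ideal_subset_freeA, of "\<lambda>w. A w - B w" B 1 1] by simp

lemma congr_brk_left: "A \<approx> A' \<Longrightarrow> Y \<in> freeA N \<Longrightarrow> brk A Y \<approx> brk A' Y"
  unfolding congr_def using stl_ideal.brl brk_lin_left[of 1 A "- 1" A' Y] by fastforce

lemma congr_brk_right: "A \<approx> A' \<Longrightarrow> Y \<in> freeA N \<Longrightarrow> brk Y A \<approx> brk Y A'"
  unfolding congr_def using stl_ideal.brr brk_lin_right[of Y 1 A "- 1" A'] by fastforce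

lemma congr_sum: "finite U \<Longrightarrow> \<forall>k\<in>U. f k \<approx> g k \<Longrightarrow> (\<lambda>w. \<Sum>k\<in>U. f k w) \<approx> (\<lambda>w. \<Sum>k\<in>U. g k w)"
proof (induction U rule: finite_induct)
  case empty
  then show ?case by (simp add: congr_refl)
next
  case (insert k U)
  then show ?case using congr_lin[of "f k" "g k" _ _ 1 1] by simp
qed

lemma gen_add:
  assumes "wf_mon N (Gen i j a)"
  shows "gen i j (a + b) \<approx> (\<lambda>w. gen i j a w + gen i j b w)"
proof -
  have "(\<lambda>w. gen i j (a + b) w - gen i j a w - gen i j b w) \<in> stl_rels m n sm"
    unfolding stl_rels_def by (intro UnI1) (use assms in blast)
  from stl_ideal.rel[OF this] show ?thesis unfolding congr_def by (simp add: algebra_simps)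
qed

lemma gen_scale:
  assumes "wf_mon N (Gen i j a)"
  shows "gen i j (sm c a) \<approx> (\<lambda>w. c * gen i j a w)"
proof -
  have "(\<lambda>w. gen i j (sm c a) w - c * gen i j a w) \<in> stl_rels m n sm"
    unfolding stl_rels_def by (rule UnI1, rule UnI1, rule UnI1, rule UnI1, rule UnI2) (use assms in blast)
  from stl_ideal.rel[OF this] show ?thesis unfolding congr_def .
qed

lemma gen_zero: "wf_mon N (Gen i j a) \<Longrightarrow> gen i j 0 \<approx> (\<lambda>_. 0)"
  using gen_scale[where c = 0] by simp

lemma bracket_gen_disjoint:
  assumes "wf_mon N (Gen i j a)" "wf_mon N (Gen k l b)" "i \<noteq> l" "j \<noteq> k"
  shows "brk (gen i j a) (gen k l b) \<approx> (\<lambda>_. 0)"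
proof -
  have "dlt (Br (Gen i j a) (Gen k l b)) \<in> stl_rels m n sm"
    unfolding stl_rels_def by (rule UnI1, rule UnI1, rule UnI1, rule UnI2) (use assms in blast)
  from stl_ideal.rel[OF this] show ?thesis by (simp add: brk_dlt ideal_iff_congr_zero)
qed

lemma bracket_gen_compose:
  assumes "wf_mon N (Gen i j a)" "wf_mon N (Gen j l b)" "i \<noteq> l"
  shows "brk (gen i j a) (gen j l b) \<approx> gen i l (a * b)"
proof -
  have "(\<lambda>w. dlt (Br (Gen i j a) (Gen j l b)) w - gen i l (a * b) w) \<in> stl_rels m n sm"
    unfolding stl_rels_def by (rule UnI1, rule UnI1, rule UnI2) (use assms in blast)
  from stl_ideal.rel[OF this] show ?thesis unfolding congr_def by (simp add: brk_dlt)
qed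

lemma bracket_gen_compose_rev:
  assumes "wf_mon N (Gen i j a)" "wf_mon N (Gen k i b)" "j \<noteq> k"
  shows "brk (gen i j a) (gen k i b)
    \<approx> (\<lambda>w. - sgn1 (tau m i j * tau m k i) * gen k j (b * a) w)"
proof -
  have "(\<lambda>w. dlt (Br (Gen i j a) (Gen k i b)) w + sgn1 (tau m i j * tau m k i) * gen k j (b * a) w)
      \<in> stl_rels m n sm"
    unfolding stl_rels_def by (rule UnI1, rule UnI2) (use assms in blast)
  from stl_ideal.rel[OF this] show ?thesis unfolding congr_def by (simp add: brk_dlt)
qed

lemma leibniz_monomials:
  assumes "wf_mon N u" "wf_mon N v" "wf_mon N x"
  shows "brk (brk (dlt u) (dlt v)) (dlt x)
    \<approx> (\<lambda>w. brk (dlt u) (brk (dlt v) (dlt x)) w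
            - sgn1 (deg m u * deg m v) * brk (dlt v) (brk (dlt u) (dlt x)) w)"
proof -
  have "(\<lambda>w. dlt (Br (Br u v) x) w - dlt (Br u (Br v x)) w
      + sgn1 (deg m u * deg m v) * dlt (Br v (Br u x)) w) \<in> stl_rels m n sm"
    unfolding stl_rels_def by (rule UnI2) (use assms in blast)
  from stl_ideal.rel[OF this] show ?thesis unfolding congr_def by (simp add: brk_dlt algebra_simps)
qed

section \<open>Existence\<close>

definition in_span_mod :: "('a mon \<Rightarrow> 'k) set \<Rightarrow> ('a mon \<Rightarrow> 'k) \<Rightarrow> bool" where
  "in_span_mod S X \<longleftrightarrow> X \<in> freeA N \<and> (\<exists>s\<in>kspan S. X \<approx> s)"

lemma in_span_mod_lin:
  "in_span_mod S X \<Longrightarrow> in_span_mod S Y \<Longrightarrow> in_span_mod S (\<lambda>w. c * X w + d * Y w)"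
  unfolding in_span_mod_def by (auto intro!: freeA_lin kspan_lin congr_lin)

lemma in_span_mod_scale: "in_span_mod S X \<Longrightarrow> in_span_mod S (\<lambda>w. c * X w)"
  using in_span_mod_lin[of S X X c 0] by simp

lemma in_span_mod_diff:
  "in_span_mod S X \<Longrightarrow> in_span_mod S Y \<Longrightarrow> in_span_mod S (\<lambda>w. X w - c * Y w)"
  using in_span_mod_lin[of S X Y 1 "- c"] by simp

lemma in_span_mod_congr: "X \<approx> Y \<Longrightarrow> in_span_mod S Y \<Longrightarrow> in_span_mod S X"
  unfolding in_span_mod_def by (auto intro: congr_freeA congr_trans)

lemma in_span_mod_zero: "in_span_mod S (\<lambda>_. 0)"
  unfolding in_span_mod_def by (auto intro!: freeA_zero bexI[of _ "\<lambda>_. 0"] congr_refl kspan.zero)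

lemma in_span_mod_base: "S \<subseteq> freeA N \<Longrightarrow> g \<in> S \<Longrightarrow> in_span_mod S g"
  unfolding in_span_mod_def by (auto intro!: bexI[of _ g] congr_refl kspan_base)

lemma in_span_mod_mono: "S \<subseteq> T \<Longrightarrow> in_span_mod S X \<Longrightarrow> in_span_mod T X"
  unfolding in_span_mod_def by (auto intro: kspan_mono)

lemma in_span_mod_linear_image:
  assumes "X \<in> kspan S" and "\<forall>g\<in>S. in_span_mod T (L g)"
    and "L (\<lambda>_. 0) = (\<lambda>_. 0)" and "\<And>c x y. L (\<lambda>w. c * x w + y w) = (\<lambda>w. c * L x w + L y w)"
  shows "in_span_mod T (L X)"
  using assms(1)
proof (induction rule: kspan.induct)
  case zero
  then show ?case by (simp add: assms(3) in_span_mod_zero)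
next
  case (add x y c)
  then show ?case using in_span_mod_lin[of T "L x" "L y" c 1] assms(2,4) by simp
qed

lemma in_span_mod_brk_left:
  assumes "in_span_mod S X" "Y \<in> freeA N" "\<forall>g\<in>S. in_span_mod T (brk g Y)"
  shows "in_span_mod T (brk X Y)"
proof -
  obtain s where s: "s \<in> kspan S" "X \<approx> s" using assms(1) unfolding in_span_mod_def by blast
  have "in_span_mod T (brk s Y)"
    by (rule in_span_mod_linear_image[where L = "\<lambda>X. brk X Y", OF s(1) assms(3)])
      (simp_all add: brk_zero_left brk_lin_left[where d = 1, simplified])
  then show ?thesis using congr_brk_left[OF s(2) assms(2)] in_span_mod_congr by blast
qed

lemma in_span_mod_brk_right:
  assumes "in_span_mod S Y" "X \<in> freeA N" "\<forall>g\<in>S. in_span_mod T (brk X g)"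
  shows "in_span_mod T (brk X Y)"
proof -
  obtain s where s: "s \<in> kspan S" "Y \<approx> s" using assms(1) unfolding in_span_mod_def by blast
  have "in_span_mod T (brk X s)"
    by (rule in_span_mod_linear_image[where L = "\<lambda>Y. brk X Y", OF s(1) assms(3)])
      (simp_all add: brk_zero_right brk_lin_right[where d = 1, simplified])
  then show ?thesis using congr_brk_right[OF s(2) assms(2)] in_span_mod_congr by blast
qed

lemma in_span_mod_brk_congr_left:
  "A \<approx> B \<Longrightarrow> Y \<in> freeA N \<Longrightarrow> in_span_mod S (brk B Y) \<Longrightarrow> in_span_mod S (brk A Y)"
  by (rule in_span_mod_congr[OF congr_brk_left])

lemma in_span_mod_brk_congr_right:
  "A \<approx> B \<Longrightarrow> X \<in> freeA N \<Longrightarrow> in_span_mod S (brk X B) \<Longrightarrow> in_span_mod S (brk X A)"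
  by (rule in_span_mod_congr[OF congr_brk_right])

lemma in_span_mod_diff_congr:
  assumes "A \<approx> (\<lambda>w. B w - c * C w)" "in_span_mod S A" "in_span_mod S C"
  shows "in_span_mod S B"
proof -
  have "B \<approx> (\<lambda>w. 1 * A w + c * C w)"
    using congr_lin[OF assms(1) congr_refl, of "- 1" 1 "\<lambda>w. 0"] unfolding congr_def
    by (simp add: algebra_simps)
  then show ?thesis using in_span_mod_congr in_span_mod_lin[OF assms(2,3)] by blast
qed

definition v_gens_on :: "(nat \<Rightarrow> nat \<Rightarrow> bool) \<Rightarrow> ('a mon \<Rightarrow> 'k) set" where
  "v_gens_on R = {gen i j a | i j a. wf_mon N (Gen i j a) \<and> R i j}"

abbreviation v_gens :: "('a mon \<Rightarrow> 'k) set" where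
  "v_gens \<equiv> v_gens_on (\<lambda>_ _. True)"

definition h_gens :: "('a mon \<Rightarrow> 'k) set" where
  "h_gens = {hgen i j a b | i j a b. wf_mon N (Gen i j a)}"

definition gens :: "('a mon \<Rightarrow> 'k) set" where
  "gens = v_gens \<union> h_gens"

lemma v_gens_on_subset_freeA: "v_gens_on R \<subseteq> freeA N"
  unfolding v_gens_on_def by (auto intro: dlt_in_freeA)

lemma v_gens_split: "v_gens = v_gens_on (<) \<union> v_gens_on (>)"
proof
  show "v_gens \<subseteq> v_gens_on (<) \<union> v_gens_on (>)"
  proof
    fix g assume "g \<in> v_gens"
    then obtain i j a where g: "g = gen i j a" and ij: "wf_mon N (Gen i j a)"
      unfolding v_gens_on_def by blast
    from ij have "i < j \<or> j < i" by auto
    with g ij show "g \<in> v_gens_on (<) \<union> v_gens_on (>)" unfolding v_gens_on_def by blast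
  qed
qed (auto simp: v_gens_on_def)

lemma gens_subset_freeA: "gens \<subseteq> freeA N"
  unfolding gens_def h_gens_def using v_gens_on_subset_freeA by (auto intro!: dlt_in_freeA)

lemma gen_in_span_v: "wf_mon N (Gen i j a) \<Longrightarrow> in_span_mod v_gens (gen i j a)"
  by (rule in_span_mod_base[OF v_gens_on_subset_freeA]) (auto simp: v_gens_on_def)

lemma in_span_v_in_span: "in_span_mod v_gens X \<Longrightarrow> in_span_mod gens X"
  by (rule in_span_mod_mono[of v_gens]) (auto simp: gens_def)

lemma bracket_gen_gen_in_span_v:
  assumes ij: "wf_mon N (Gen i j a)" and kl: "wf_mon N (Gen k l b)" and "\<not> (i = l \<and> j = k)"
  shows "in_span_mod v_gens (brk (gen i j a) (gen k l b))"
proof -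
  consider "i \<noteq> l" "j \<noteq> k" | "j = k" "i \<noteq> l" | "i = l" "j \<noteq> k" using assms(3) by blast
  then show ?thesis
  proof cases
    case 1
    then show ?thesis using bracket_gen_disjoint[OF ij kl] in_span_mod_congr in_span_mod_zero by blast
  next
    case 2
    with ij kl have "wf_mon N (Gen j l b)" "wf_mon N (Gen i l (a * b))" by auto
    from in_span_mod_congr[OF bracket_gen_compose[OF ij this(1)] gen_in_span_v[OF this(2)]]
    show ?thesis using 2 by simp
  next
    case 3
    with ij kl have "wf_mon N (Gen k i b)" "wf_mon N (Gen k j (b * a))" by auto
    from in_span_mod_congr[OF bracket_gen_compose_rev[OF ij this(1)]
        in_span_mod_scale[OF gen_in_span_v[OF this(2)]]]
    show ?thesis using 3 by simp
  qed
qed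

lemma bracket_gen_gen_in_span:
  assumes "wf_mon N (Gen i j a)" "wf_mon N (Gen k l b)"
  shows "in_span_mod gens (brk (gen i j a) (gen k l b))"
proof (cases "i = l \<and> j = k")
  case True
  then have "brk (gen i j a) (gen k l b) \<in> gens"
    unfolding gens_def h_gens_def brk_dlt using assms(1) by blast
  then show ?thesis by (rule in_span_mod_base[OF gens_subset_freeA])
next
  case False
  then show ?thesis using bracket_gen_gen_in_span_v[OF assms] in_span_v_in_span by blast
qed

lemma nested_bracket_left_in_span_v:
  assumes kl: "wf_mon N (Gen k l c)" and ij: "wf_mon N (Gen i j a)" and "(k, l) \<noteq> (j, i)"
  shows "in_span_mod v_gens (brk (brk (gen k l c) (gen i j a)) (gen j i b))"
proof -
  have ji: "wf_mon N (Gen j i b)" and x: "gen j i b \<in> freeA N" using ij by (auto intro: dlt_in_freeA)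
  consider "k \<noteq> j" "l \<noteq> i" | "l = i" "k \<noteq> j" | "k = j" "l \<noteq> i" using assms(3) by blast
  then show ?thesis
  proof cases
    case 1
    show ?thesis
      by (rule in_span_mod_brk_congr_left[OF bracket_gen_disjoint[OF kl ij 1] x])
        (simp add: brk_zero_left in_span_mod_zero)
  next
    case 2
    with kl ij have ki: "wf_mon N (Gen k i c)" and kj: "wf_mon N (Gen k j (c * a))" and "k \<noteq> i"
      by auto
    have "in_span_mod v_gens (brk (gen k j (c * a)) (gen j i b))"
      using ji \<open>k \<noteq> i\<close> by (intro bracket_gen_gen_in_span_v[OF kj]) auto
    from in_span_mod_brk_congr_left[OF bracket_gen_compose[OF ki ij \<open>k \<noteq> j\<close>] x this]
    show ?thesis using 2 by simp
  next
    case 3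
    with kl ij have jl: "wf_mon N (Gen j l c)" and il: "wf_mon N (Gen i l (a * c))" and "l \<noteq> j"
      by auto
    have "in_span_mod v_gens (brk (gen i l (a * c)) (gen j i b))"
      using ji \<open>l \<noteq> j\<close> by (intro bracket_gen_gen_in_span_v[OF il]) auto
    from in_span_mod_brk_congr_left[OF bracket_gen_compose_rev[OF jl ij \<open>l \<noteq> i\<close>] x,
        unfolded brk_scale_left, OF in_span_mod_scale[OF this]]
    show ?thesis using 3 by simp
  qed
qed

lemma nested_bracket_right_in_span_v:
  assumes kl: "wf_mon N (Gen k l c)" and ij: "wf_mon N (Gen i j a)" and "(k, l) \<noteq> (i, j)"
  shows "in_span_mod v_gens (brk (gen i j a) (brk (gen k l c) (gen j i b)))"
proof -
  have ji: "wf_mon N (Gen j i b)" and v: "gen i j a \<in> freeA N" using ij by (auto intro: dlt_in_freeA)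
  consider "k \<noteq> i" "l \<noteq> j" | "l = j" "k \<noteq> i" | "k = i" "l \<noteq> j" using assms(3) by blast
  then show ?thesis
  proof cases
    case 1
    show ?thesis
      by (rule in_span_mod_brk_congr_right[OF bracket_gen_disjoint[OF kl ji 1] v])
        (simp add: brk_zero_right in_span_mod_zero)
  next
    case 2
    with kl ij have kj: "wf_mon N (Gen k j c)" and ki: "wf_mon N (Gen k i (c * b))" and "k \<noteq> j"
      by auto
    have "in_span_mod v_gens (brk (gen i j a) (gen k i (c * b)))"
      using \<open>k \<noteq> j\<close> by (intro bracket_gen_gen_in_span_v[OF ij ki]) auto
    from in_span_mod_brk_congr_right[OF bracket_gen_compose[OF kj ji \<open>k \<noteq> i\<close>] v this]
    show ?thesis using 2 by simp
  next
    case 3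
    with kl ij have il: "wf_mon N (Gen i l c)" and jl: "wf_mon N (Gen j l (b * c))" and "l \<noteq> i"
      by auto
    have "in_span_mod v_gens (brk (gen i j a) (gen j l (b * c)))"
      using \<open>l \<noteq> i\<close> by (intro bracket_gen_gen_in_span_v[OF ij jl]) auto
    from in_span_mod_brk_congr_right[OF bracket_gen_compose_rev[OF il ji \<open>l \<noteq> j\<close>] v,
        unfolded brk_scale_right, OF in_span_mod_scale[OF this]]
    show ?thesis using 3 by simp
  qed
qed

lemma bracket_gen_hgen_in_span_v:
  assumes kl: "wf_mon N (Gen k l c)" and ij: "wf_mon N (Gen i j a)"
    and "(k, l) \<noteq> (i, j)" "(k, l) \<noteq> (j, i)"
  shows "in_span_mod v_gens (brk (gen k l c) (hgen i j a b))"
proof -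
  have "wf_mon N (Gen j i b)" using ij by auto
  from in_span_mod_diff_congr[OF leibniz_monomials[OF kl ij this]
      nested_bracket_left_in_span_v[OF kl ij assms(4)] nested_bracket_right_in_span_v[OF kl ij assms(3)]]
  show ?thesis by (simp add: brk_dlt)
qed

lemma bracket_gen_in_span_v_in_span:
  "wf_mon N (Gen k l c) \<Longrightarrow> in_span_mod v_gens Y \<Longrightarrow> in_span_mod gens (brk (gen k l c) Y)"
  by (rule in_span_mod_brk_right[OF _ dlt_in_freeA])
    (auto simp: v_gens_on_def intro: bracket_gen_gen_in_span)

lemma bracket_gen_hgen_in_span_via_third_index:
  assumes pq: "wf_mon N (Gen p q c)" and ij: "wf_mon N (Gen i j a)"
    and t: "1 \<le> t" "t \<le> N" "t \<noteq> i" "t \<noteq> j" "t \<noteq> p" "t \<noteq> q"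
  shows "in_span_mod gens (brk (gen p q c) (hgen i j a b))"
proof -
  have pt: "wf_mon N (Gen p t c)" and tq: "wf_mon N (Gen t q 1)" and h: "wf_mon N (Br (Gen i j a) (Gen j i b))"
    using pq ij t by auto
  have factor: "gen p q c \<approx> brk (gen p t c) (gen t q 1)"
    using congr_sym[OF bracket_gen_compose[OF pt tq]] pq by simp
  have "in_span_mod v_gens (brk (gen t q 1) (hgen i j a b))"
    using t by (intro bracket_gen_hgen_in_span_v[OF tq ij]) auto
  moreover have "in_span_mod v_gens (brk (gen p t c) (hgen i j a b))"
    using t by (intro bracket_gen_hgen_in_span_v[OF pt ij]) auto
  ultimately have "in_span_mod gens (brk (brk (gen p t c) (gen t q 1)) (hgen i j a b))"
    by (intro in_span_mod_congr[OF leibniz_monomials[OF pt tq h]] in_span_mod_diff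
        bracket_gen_in_span_v_in_span[OF pt] bracket_gen_in_span_v_in_span[OF tq])
  then show ?thesis by (rule in_span_mod_brk_congr_left[OF factor dlt_in_freeA[OF h]])
qed

lemma gens_cases:
  assumes "g \<in> gens"
  obtains (gen) i j a where "g = gen i j a" "wf_mon N (Gen i j a)"
    | (hgen) i j a b where "g = hgen i j a b" "wf_mon N (Gen i j a)"
  using assms unfolding gens_def v_gens_on_def h_gens_def by blast

context
  assumes N3: "3 \<le> N"
begin

lemma bracket_gen_hgen_in_span:
  assumes kl: "wf_mon N (Gen k l c)" and ij: "wf_mon N (Gen i j a)"
  shows "in_span_mod gens (brk (gen k l c) (hgen i j a b))"
proof (cases "(k, l) = (i, j) \<or> (k, l) = (j, i)")
  case True
  obtain t where "1 \<le> t" "t \<le> N" "t \<noteq> i" "t \<noteq> j" using exists_third_index[OF N3] by blast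
  with True show ?thesis using bracket_gen_hgen_in_span_via_third_index[OF kl ij] by blast
next
  case False
  then show ?thesis using bracket_gen_hgen_in_span_v[OF kl ij] in_span_v_in_span by blast
qed

lemma bracket_gen_gens_in_span:
  "wf_mon N (Gen k l c) \<Longrightarrow> g \<in> gens \<Longrightarrow> in_span_mod gens (brk (gen k l c) g)"
  by (erule gens_cases) (simp_all add: bracket_gen_gen_in_span bracket_gen_hgen_in_span)

lemma bracket_gen_in_span:
  "wf_mon N (Gen k l c) \<Longrightarrow> in_span_mod gens Y \<Longrightarrow> in_span_mod gens (brk (gen k l c) Y)"
  by (rule in_span_mod_brk_right[OF _ dlt_in_freeA]) (auto intro: bracket_gen_gens_in_span)

lemma bracket_hgen_gens_in_span:
  assumes ij: "wf_mon N (Gen i j a)" and g: "g \<in> gens"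
  shows "in_span_mod gens (brk (hgen i j a b) g)"
proof -
  obtain x where gx: "g = dlt x" and x: "wf_mon N x"
    using g by (cases rule: gens_cases) auto
  have ji: "wf_mon N (Gen j i b)" using ij by auto
  have "in_span_mod gens (brk (gen i j a) (brk (gen j i b) (dlt x)))"
    using bracket_gen_in_span[OF ij bracket_gen_gens_in_span[OF ji g]] gx by simp
  moreover have "in_span_mod gens (brk (gen j i b) (brk (gen i j a) (dlt x)))"
    using bracket_gen_in_span[OF ji bracket_gen_gens_in_span[OF ij g]] gx by simp
  ultimately have "in_span_mod gens (brk (brk (gen i j a) (gen j i b)) (dlt x))"
    by (intro in_span_mod_congr[OF leibniz_monomials[OF ij ji x]] in_span_mod_diff)
  then show ?thesis by (simp add: gx brk_dlt)
qed

lemma bracket_gens_in_span: "g \<in> gens \<Longrightarrow> g' \<in> gens \<Longrightarrow> in_span_mod gens (brk g g')"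
  by (erule gens_cases) (simp_all add: bracket_gen_gens_in_span bracket_hgen_gens_in_span)

lemma bracket_in_span:
  assumes X: "in_span_mod gens X" and Y: "in_span_mod gens Y"
  shows "in_span_mod gens (brk X Y)"
proof (rule in_span_mod_brk_left[OF X])
  show "Y \<in> freeA N" using Y unfolding in_span_mod_def by simp
  show "\<forall>g\<in>gens. in_span_mod gens (brk g Y)"
    using gens_subset_freeA by (auto intro: in_span_mod_brk_right[OF Y] bracket_gens_in_span)
qed

lemma monomial_in_span: "wf_mon N u \<Longrightarrow> in_span_mod gens (dlt u)"
proof (induction u)
  case (Gen i j a)
  then show ?case by (intro in_span_mod_base[OF gens_subset_freeA]) (auto simp: gens_def v_gens_on_def)
next
  case (Br u v)
  then show ?case using bracket_in_span by (simp add: brk_dlt[symmetric])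
qed

lemma freeA_in_span: "X \<in> freeA N \<Longrightarrow> in_span_mod gens X"
  using in_span_mod_linear_image[OF freeA_in_kspan_monomials, where L = id] monomial_in_span
  by auto

end

lemma kspan_gens_decompose:
  assumes "s \<in> kspan gens"
  shows "\<exists>p\<in>Pspan N. \<exists>h\<in>Hspan N. \<exists>q\<in>Qspan N. s = (\<lambda>w. p w + h w + q w)"
proof -
  have "gens = (v_gens_on (<) \<union> h_gens) \<union> v_gens_on (>)"
    unfolding gens_def v_gens_split by blast
  then obtain p h q where "p \<in> kspan (v_gens_on (<))" "h \<in> kspan h_gens" "q \<in> kspan (v_gens_on (>))"
    "s = (\<lambda>w. p w + h w + q w)"
    using assms by (auto dest!: kspan_Un)
  then show ?thesis unfolding Pspan_def Hspan_def Qspan_def v_gens_on_def h_gens_def by blast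
qed

lemma triangular_decomposition_exists:
  assumes "3 \<le> N" "X \<in> freeA N"
  shows "\<exists>p\<in>Pspan N. \<exists>h\<in>Hspan N. \<exists>q\<in>Qspan N. (\<lambda>w. X w - (p w + h w + q w)) \<in> I"
proof -
  from freeA_in_span[OF assms] obtain s where "s \<in> kspan gens" "X \<approx> s"
    unfolding in_span_mod_def by blast
  with kspan_gens_decompose show ?thesis unfolding congr_def by blast
qed

section \<open>Uniqueness\<close>

definition rep :: "('a mon \<Rightarrow> 'k) \<Rightarrow> nat \<Rightarrow> nat \<Rightarrow> 'a" where
  "rep f = (\<lambda>x y. \<Sum>u | f u \<noteq> 0. sm (f u) (rep_mon m N u x y))"

lemma rep_eq_sum:
  "finite S \<Longrightarrow> {u. f u \<noteq> 0} \<subseteq> S \<Longrightarrow> rep f x y = (\<Sum>u\<in>S. sm (f u) (rep_mon m N u x y))"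
  unfolding rep_def by (rule sum.mono_neutral_left) auto

lemma rep_zero: "rep (\<lambda>_. 0) x y = 0"
  unfolding rep_def by simp

lemma rep_dlt: "rep (dlt u) x y = rep_mon m N u x y"
  using rep_eq_sum[of "{u}" "dlt u" x y] by (auto simp: dlt_def)

lemma rep_lin:
  assumes f: "finite {u. f u \<noteq> 0}" and g: "finite {u. g u \<noteq> 0}"
  shows "rep (\<lambda>w. c * f w + d * g w) x y = sm c (rep f x y) + sm d (rep g x y)"
proof -
  let ?S = "{u. f u \<noteq> 0} \<union> {u. g u \<noteq> 0}"
  have S: "finite ?S" using f g by simp
  have "rep (\<lambda>w. c * f w + d * g w) x y = (\<Sum>u\<in>?S. sm (c * f u + d * g u) (rep_mon m N u x y))"
    by (rule rep_eq_sum[OF S]) auto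
  also have "\<dots> = (\<Sum>u\<in>?S. sm c (sm (f u) (rep_mon m N u x y)) + sm d (sm (g u) (rep_mon m N u x y)))"
    by (simp add: sm_add_scalar sm_sm)
  also have "\<dots> = sm c (rep f x y) + sm d (rep g x y)"
    using rep_eq_sum[OF S, of f] rep_eq_sum[OF S, of g] by (simp add: sum.distrib sm_sum)
  finally show ?thesis .
qed

lemma rep_three_monomials:
  "rep (\<lambda>w. c1 * dlt A w + c2 * dlt B w + c3 * dlt C w) x y
    = sm c1 (rep_mon m N A x y) + sm c2 (rep_mon m N B x y) + sm c3 (rep_mon m N C x y)"
  using rep_lin[OF finite_support_lin[OF finite_support_dlt finite_support_dlt] finite_support_dlt,
      where c = 1 and d = c3]
    rep_lin[OF finite_support_dlt finite_support_dlt, where c = c1 and d = c2]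
  by (simp add: rep_dlt)

lemma rep_brk:
  assumes "finite {u. f u \<noteq> 0}" and "finite {u. g u \<noteq> 0}"
  shows "rep (brk f g) x y = super_bracket m N (rep f) (rep g) x y"
proof -
  define F G where "F = {u. f u \<noteq> 0}" and "G = {u. g u \<noteq> 0}"
  have FG: "finite F" "finite G" using assms by (simp_all add: F_def G_def)
  let ?P = "\<lambda>u v z. sm (f u) (rep_mon m N u x z) * sm (g v) (rep_mon m N v z y)"
  let ?Q = "\<lambda>u v z. sm (g v) (rep_mon m N v x z) * sm (f u) (rep_mon m N u z y)"
  let ?s = "\<lambda>z. (- 1) ^ (tau m x z * tau m z y) :: 'a"
  have expand: "sm (f u * g v) (rep_mon m N (Br u v) x y) = (\<Sum>z\<in>{1..N}. ?P u v z - ?s z * ?Q u v z)"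
    for u v by (simp add: super_bracket_def sm_sum sm_diff sm_sign_mult sm_mult mult.commute)
  have "rep (brk f g) x y = (\<Sum>w\<in>(\<lambda>(u, v). Br u v) ` (F \<times> G). sm (brk f g w) (rep_mon m N w x y))"
    using FG by (intro rep_eq_sum) (auto simp: F_def G_def dest!: brk_support)
  also have "\<dots> = (\<Sum>(u, v)\<in>F \<times> G. sm (f u * g v) (rep_mon m N (Br u v) x y))"
    by (subst sum.reindex) (auto simp: inj_on_def case_prod_unfold)
  also have "\<dots> = (\<Sum>u\<in>F. \<Sum>v\<in>G. sm (f u * g v) (rep_mon m N (Br u v) x y))"
    by (simp add: sum.cartesian_product)
  also have "\<dots> = (\<Sum>u\<in>F. \<Sum>v\<in>G. \<Sum>z\<in>{1..N}. ?P u v z - ?s z * ?Q u v z)"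
    by (simp only: expand)
  also have "\<dots> = (\<Sum>u\<in>F. \<Sum>z\<in>{1..N}. \<Sum>v\<in>G. ?P u v z - ?s z * ?Q u v z)"
    by (rule sum.cong[OF refl], rule sum.swap)
  also have "\<dots> = (\<Sum>z\<in>{1..N}. \<Sum>u\<in>F. \<Sum>v\<in>G. ?P u v z - ?s z * ?Q u v z)"
    by (rule sum.swap)
  also have "\<dots> = (\<Sum>z\<in>{1..N}. (\<Sum>u\<in>F. \<Sum>v\<in>G. ?P u v z) - ?s z * (\<Sum>v\<in>G. \<Sum>u\<in>F. ?Q u v z))"
    by (simp only: sum_subtractf sum_distrib_left sum.swap[of _ F G])
  also have "\<dots> = super_bracket m N (rep f) (rep g) x y"
    unfolding super_bracket_def rep_def F_def[symmetric] G_def[symmetric] by (simp only: sum_product)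
  finally show ?thesis .
qed

lemma rep_rel: "x \<in> stl_rels m n sm \<Longrightarrow> rep x a0 b0 = 0"
  unfolding stl_rels_def
proof (elim UnE CollectE exE conjE)
  fix i j a b
  assume "x = (\<lambda>w. gen i j (a + b) w - gen i j a w - gen i j b w)"
  then show "rep x a0 b0 = 0"
    using rep_three_monomials[of 1 "Gen i j (a + b)" "- 1" "Gen i j a" "- 1" "Gen i j b" a0 b0]
    by (simp add: sm_minus_one elem_def)
next
  fix i j a c
  assume "x = (\<lambda>w. gen i j (sm c a) w - c * gen i j a w)"
  then show "rep x a0 b0 = 0"
    using rep_three_monomials[of 1 "Gen i j (sm c a)" "- c" "Gen i j a" 0 "Gen i j a" a0 b0]
    by (simp add: sm_uminus_scalar elem_def)
next
  fix i j k l a b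
  assume "x = dlt (Br (Gen i j a) (Gen k l b))" "i \<noteq> l" "j \<noteq> k"
  then show "rep x a0 b0 = 0" by (simp add: rep_dlt super_bracket_elem)
next
  fix i j k l a b
  assume "x = (\<lambda>w. dlt (Br (Gen i j a) (Gen k l b)) w - gen i l (a * b) w)"
    and "wf_mon N (Gen i j a)" "i \<noteq> l" "j = k"
  then show "rep x a0 b0 = 0"
    using rep_three_monomials[of 1 "Br (Gen i j a) (Gen k l b)" "- 1" "Gen i l (a * b)"
        0 "Gen i l (a * b)" a0 b0]
    by (simp add: sm_minus_one super_bracket_elem) (simp add: elem_def)
next
  fix i j k l a b
  assume "x = (\<lambda>w. dlt (Br (Gen i j a) (Gen k l b)) w
      + sgn1 (tau m i j * tau m k l) * gen k j (b * a) w)"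
    and "wf_mon N (Gen k l b)" "i = l" "j \<noteq> k"
  then show "rep x a0 b0 = 0"
    using rep_three_monomials[of 1 "Br (Gen i j a) (Gen k l b)" "sgn1 (tau m i j * tau m k l)"
        "Gen k j (b * a)" 0 "Gen k j (b * a)" a0 b0]
    by (simp add: sgn1_def sm_sign super_bracket_elem) (simp add: elem_def mult.commute)
next
  fix u v z
  assume "x = (\<lambda>w. dlt (Br (Br u v) z) w - dlt (Br u (Br v z)) w
      + sgn1 (deg m u * deg m v) * dlt (Br v (Br u z)) w)"
  then show "rep x a0 b0 = 0"
    using rep_three_monomials[of 1 "Br (Br u v) z" "- 1" "Br u (Br v z)" "sgn1 (deg m u * deg m v)"
        "Br v (Br u z)" a0 b0] rep_mon_leibniz[of m N u v z a0 b0]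
    by (simp add: sm_minus_one sgn1_def sm_sign)
qed

lemma ideal_finite_support: "x \<in> I \<Longrightarrow> finite {u. x u \<noteq> 0}"
  using ideal_subset_freeA freeA_finite_support by blast

lemma rep_ideal: "x \<in> I \<Longrightarrow> rep x = (\<lambda>_ _. 0)"
proof (induction rule: stl_ideal.induct)
  case (rel x)
  then show ?case using rep_rel by blast
next
  case zero
  then show ?case by (simp add: rep_zero fun_eq_iff)
next
  case (add x y c)
  then show ?case
    using rep_lin[OF ideal_finite_support[OF add.hyps(1)] ideal_finite_support[OF add.hyps(2)], of c 1]
    by (simp add: fun_eq_iff)
next
  case (brl x y)
  then show ?case using rep_brk[OF ideal_finite_support[OF brl.hyps(1)] freeA_finite_support]
    by (simp add: fun_eq_iff super_bracket_def)
next
  case (brr x y)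
  then show ?case using rep_brk[OF freeA_finite_support ideal_finite_support[OF brr.hyps(1)]]
    by (simp add: fun_eq_iff super_bracket_def)
qed

lemma rep_kspan_support:
  assumes "X \<in> kspan S" and S: "S \<subseteq> freeA N" "\<And>g a b. g \<in> S \<Longrightarrow> rep g a b \<noteq> 0 \<Longrightarrow> R a b"
  shows "rep X a b \<noteq> 0 \<Longrightarrow> R a b"
  using assms(1)
proof (induction rule: kspan.induct)
  case zero
  then show ?case by (simp add: rep_zero)
next
  case (add g y c)
  have "g \<in> freeA N" "y \<in> freeA N" using add.hyps S(1) kspan_in_freeA by auto
  then have "rep (\<lambda>w. c * g w + y w) a b = sm c (rep g a b) + rep y a b"
    using rep_lin[of g y c 1] by (simp add: freeA_finite_support)
  with add.prems have "rep g a b \<noteq> 0 \<or> rep y a b \<noteq> 0" by auto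
  with add.IH S(2) add.hyps(1) show ?case by blast
qed

lemma rep_v_gens_on_support: "g \<in> v_gens_on R \<Longrightarrow> rep g a b \<noteq> 0 \<Longrightarrow> R a b"
  unfolding v_gens_on_def by (auto simp: rep_dlt elem_def split: if_splits)

lemma rep_h_gens_support: "g \<in> h_gens \<Longrightarrow> rep g a b \<noteq> 0 \<Longrightarrow> a = b"
  unfolding h_gens_def by (auto simp: rep_dlt super_bracket_elem split: if_splits)

definition offdiag :: "(nat \<Rightarrow> nat \<Rightarrow> bool) \<Rightarrow> (nat \<times> nat) set" where
  "offdiag R = {(i, j) \<in> {1..N} \<times> {1..N}. i \<noteq> j \<and> R i j}"

definition gen_sum :: "(nat \<times> nat) set \<Rightarrow> (nat \<Rightarrow> nat \<Rightarrow> 'a) \<Rightarrow> 'a mon \<Rightarrow> 'k" where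
  "gen_sum U A = (\<lambda>w. \<Sum>(i, j)\<in>U. gen i j (A i j) w)"

lemma finite_offdiag: "finite (offdiag R)"
  by (rule finite_subset[of _ "{1..N} \<times> {1..N}"]) (auto simp: offdiag_def)

lemma offdiag_wf_mon: "(i, j) \<in> offdiag R \<Longrightarrow> wf_mon N (Gen i j a)"
  by (auto simp: offdiag_def)

lemma sum_gen_zero:
  assumes "U \<subseteq> offdiag R"
  shows "gen_sum U (\<lambda>_ _. 0) \<approx> (\<lambda>_. 0)"
proof -
  have "finite U" using assms finite_offdiag finite_subset by blast
  then have "(\<lambda>w. \<Sum>k\<in>U. gen (fst k) (snd k) 0 w) \<approx> (\<lambda>w. \<Sum>k\<in>U. 0)"
    using assms by (intro congr_sum) (auto intro!: gen_zero offdiag_wf_mon)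
  then show ?thesis by (simp add: gen_sum_def case_prod_unfold)
qed

lemma gen_sum_lin:
  "gen_sum (offdiag R) (\<lambda>i j. sm c (A i j) + B i j)
    \<approx> (\<lambda>w. c * gen_sum (offdiag R) A w + gen_sum (offdiag R) B w)"
proof -
  have "gen (fst k) (snd k) (sm c (A (fst k) (snd k)) + B (fst k) (snd k))
      \<approx> (\<lambda>w. c * gen (fst k) (snd k) (A (fst k) (snd k)) w + gen (fst k) (snd k) (B (fst k) (snd k)) w)"
    if "k \<in> offdiag R" for k
  proof -
    have wf: "wf_mon N (Gen (fst k) (snd k) a)" for a
      using offdiag_wf_mon[of "fst k" "snd k" R a] that by simp
    show ?thesis
      by (rule congr_trans[OF gen_add[OF wf] congr_add[OF gen_scale[OF wf] congr_refl]])
  qed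
  then have "(\<lambda>w. \<Sum>k\<in>offdiag R. gen (fst k) (snd k) (sm c (A (fst k) (snd k)) + B (fst k) (snd k)) w)
      \<approx> (\<lambda>w. \<Sum>k\<in>offdiag R. c * gen (fst k) (snd k) (A (fst k) (snd k)) w
              + gen (fst k) (snd k) (B (fst k) (snd k)) w)"
    by (intro congr_sum finite_offdiag) auto
  then show ?thesis by (simp add: gen_sum_def case_prod_unfold sum.distrib sum_distrib_left)
qed

lemma gen_sum_elem:
  assumes "(i, j) \<in> offdiag R"
  shows "gen_sum (offdiag R) (elem i j a) \<approx> gen i j a"
proof -
  let ?U = "offdiag R - {(i, j)}"
  have "gen_sum ?U (elem i j a) = gen_sum ?U (\<lambda>_ _. 0)"
    unfolding gen_sum_def by (intro ext sum.cong) (auto simp: elem_def split: if_split_asm)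
  then have "gen_sum (offdiag R) (elem i j a) = (\<lambda>w. gen i j a w + gen_sum ?U (\<lambda>_ _. 0) w)"
    unfolding gen_sum_def by (auto simp: sum.remove[OF finite_offdiag assms] elem_def fun_eq_iff)
  moreover have "(\<lambda>w. gen i j a w + gen_sum ?U (\<lambda>_ _. 0) w) \<approx> (\<lambda>w. gen i j a w + 0)"
    by (rule congr_add[OF congr_refl sum_gen_zero]) auto
  ultimately show ?thesis by simp
qed

lemma kspan_v_gens_congr_gen_sum:
  "p \<in> kspan (v_gens_on R) \<Longrightarrow> p \<approx> gen_sum (offdiag R) (rep p)"
proof (induction rule: kspan.induct)
  case zero
  show ?case using congr_sym[OF sum_gen_zero[of "offdiag R" R]] by (simp add: rep_zero)
next
  case (add g y c)
  from add.hyps(1) obtain i j a where g: "g = gen i j a" and ij: "(i, j) \<in> offdiag R"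
    unfolding v_gens_on_def offdiag_def by auto
  have "y \<in> freeA N" using add.hyps(2) v_gens_on_subset_freeA by (rule kspan_in_freeA)
  note y = freeA_finite_support[OF this]
  have "rep (\<lambda>w. c * g w + 1 * y w) = (\<lambda>x y'. sm c (elem i j a x y') + rep y x y')"
    using rep_lin[OF finite_support_dlt y, where c = c and d = 1]
    by (simp add: g rep_dlt fun_eq_iff)
  then have "gen_sum (offdiag R) (rep (\<lambda>w. c * g w + y w))
      \<approx> (\<lambda>w. c * gen_sum (offdiag R) (elem i j a) w + 1 * gen_sum (offdiag R) (rep y) w)"
    using gen_sum_lin by simp
  also have "\<dots> \<approx> (\<lambda>w. c * g w + 1 * y w)"
    using congr_lin[OF gen_sum_elem[OF ij] congr_sym[OF add.IH], where c = c and d = 1] g by simp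
  finally show ?case by (simp add: congr_sym)
qed

lemma kspan_v_gens_in_ideal:
  assumes p: "p \<in> kspan (v_gens_on R)" and vanish: "\<And>i j. R i j \<Longrightarrow> rep p i j = 0"
  shows "p \<in> I"
proof -
  have "gen_sum (offdiag R) (rep p) = gen_sum (offdiag R) (\<lambda>_ _. 0)"
    unfolding gen_sum_def by (intro ext sum.cong) (auto simp: offdiag_def vanish)
  then have "p \<approx> gen_sum (offdiag R) (\<lambda>_ _. 0)"
    using kspan_v_gens_congr_gen_sum[OF p] by simp
  then show ?thesis
    unfolding ideal_iff_congr_zero by (rule congr_trans[OF _ sum_gen_zero[of _ R]]) simp
qed

lemma triangular_decomposition_unique:
  assumes p: "p \<in> Pspan N" and h: "h \<in> Hspan N" and q: "q \<in> Qspan N"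
    and sum: "(\<lambda>w. p w + h w + q w) \<in> I"
  shows "p \<in> I \<and> h \<in> I \<and> q \<in> I"
proof -
  have p': "p \<in> kspan (v_gens_on (<))" and q': "q \<in> kspan (v_gens_on (>))"
    and h': "h \<in> kspan h_gens"
    using p q h unfolding Pspan_def Qspan_def Hspan_def v_gens_on_def h_gens_def by simp_all
  have h_gens_subset_freeA: "h_gens \<subseteq> freeA N"
    using gens_subset_freeA unfolding gens_def by blast
  have upper: "rep p a b \<noteq> 0 \<Longrightarrow> a < b" for a b
    using rep_kspan_support[OF p' v_gens_on_subset_freeA rep_v_gens_on_support] .
  have lower: "rep q a b \<noteq> 0 \<Longrightarrow> a > b" for a b
    using rep_kspan_support[OF q' v_gens_on_subset_freeA rep_v_gens_on_support] .
  have diagonal: "rep h a b \<noteq> 0 \<Longrightarrow> a = b" for a b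
    using rep_kspan_support[OF h' h_gens_subset_freeA rep_h_gens_support] .
  have "p \<in> freeA N" "h \<in> freeA N" "q \<in> freeA N"
    using p' h' q' v_gens_on_subset_freeA h_gens_subset_freeA by (auto intro: kspan_in_freeA)
  note fin = this[THEN freeA_finite_support]
  have "rep (\<lambda>w. p w + h w + q w) a b = rep p a b + rep h a b + rep q a b" for a b
    using rep_lin[OF finite_support_lin[OF fin(1,2)] fin(3), of 1 1 1 1]
      rep_lin[OF fin(1,2), of 1 1] by simp
  then have total: "rep p a b + rep h a b + rep q a b = 0" for a b
    using rep_ideal[OF sum] by (simp add: fun_eq_iff)
  have "p \<in> I"
    using total lower diagonal by (intro kspan_v_gens_in_ideal[OF p']) (metis add.right_neutral less_asym less_irrefl)
  moreover have "q \<in> I"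
    using total upper diagonal by (intro kspan_v_gens_in_ideal[OF q']) (metis add_0 less_asym less_irrefl)
  moreover from calculation
  have "(\<lambda>w. 1 * (\<lambda>w. 1 * (p w + h w + q w) + (- 1) * p w) w + (- 1) * q w) \<in> I"
    by (intro ideal_lin sum) simp_all
  then have "h \<in> I" by simp
  ultimately show ?thesis by blast
qed

end

theorem lemma3p2:
  fixes sm :: "'k::field \<Rightarrow> 'a::ring_1 \<Rightarrow> 'a" and m n :: nat
  assumes "kalg sm"
    and "(2::'k) \<noteq> 0" and "(3::'k) \<noteq> 0"
    and "m + n \<ge> 3"
  shows "(\<forall>X \<in> freeA (m + n). \<exists>p \<in> Pspan (m + n). \<exists>h \<in> Hspan (m + n). \<exists>q \<in> Qspan (m + n).
            (\<lambda>w. X w - (p w + h w + q w)) \<in> stl_ideal m n sm)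
       \<and> (\<forall>p \<in> Pspan (m + n). \<forall>h \<in> Hspan (m + n). \<forall>q \<in> Qspan (m + n).
            (\<lambda>w. p w + h w + q w) \<in> stl_ideal m n sm \<longrightarrow>
              p \<in> stl_ideal m n sm \<and> h \<in> stl_ideal m n sm \<and> q \<in> stl_ideal m n sm)"
proof -
  interpret stl_presentation sm m n
    by unfold_locales (rule assms(1))
  show ?thesis using triangular_decomposition_exists[OF assms(4)] triangular_decomposition_unique by blast
qed

end
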